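(* Let $R$ be a ring, $P$ a discrete projective left $R$-module and $Q$ a discrete projective right $R$-module, and let $Q^*=\operatorname{Hom}_R(Q,R)$ carry the topology of pointwise convergence. Then every continuous $R$-linear map $Q^*\to P$ has finitely generated image.
   Context: The topology of pointwise convergence on $Q^*$ has as a base of neighborhoods of $0$ the annihilators of finitely generated submodules of $Q$; $P$ is discrete. *)

theory Defs
  imports "HOL-Algebra.Module" "HOL-Analysis.Function_Topology"
begin

text \<open>A left or right module is
  represented by a record of type module whose smult field is the scalar action;
  for a right module, smult a x stands for x a.\<close>

definition left_module :: "('r, 'c) ring_scheme \<Rightarrow> ('r, 'm) module \<Rightarrow> bool" where
  "left_module R M \<longleftrightarrow> ring R \<and> abelian_group M \<and>
    (\<forall>a\<in>carrier R. \<forall>x\<in>carrier M. smult M a x \<in> carrier M) \<and>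
    (\<forall>a\<in>carrier R. \<forall>b\<in>carrier R. \<forall>x\<in>carrier M.
        smult M (a \<oplus>\<^bsub>R\<^esub> b) x = smult M a x \<oplus>\<^bsub>M\<^esub> smult M b x) \<and>
    (\<forall>a\<in>carrier R. \<forall>x\<in>carrier M. \<forall>y\<in>carrier M.
        smult M a (x \<oplus>\<^bsub>M\<^esub> y) = smult M a x \<oplus>\<^bsub>M\<^esub> smult M a y) \<and>
    (\<forall>a\<in>carrier R. \<forall>b\<in>carrier R. \<forall>x\<in>carrier M.
        smult M (a \<otimes>\<^bsub>R\<^esub> b) x = smult M a (smult M b x)) \<and>
    (\<forall>x\<in>carrier M. smult M \<one>\<^bsub>R\<^esub> x = x)"

text \<open>Right module: smult M a x denotes x a, so x (a b) = (x a) b.\<close>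
definition right_module :: "('r, 'c) ring_scheme \<Rightarrow> ('r, 'm) module \<Rightarrow> bool" where
  "right_module R M \<longleftrightarrow> ring R \<and> abelian_group M \<and>
    (\<forall>a\<in>carrier R. \<forall>x\<in>carrier M. smult M a x \<in> carrier M) \<and>
    (\<forall>a\<in>carrier R. \<forall>b\<in>carrier R. \<forall>x\<in>carrier M.
        smult M (a \<oplus>\<^bsub>R\<^esub> b) x = smult M a x \<oplus>\<^bsub>M\<^esub> smult M b x) \<and>
    (\<forall>a\<in>carrier R. \<forall>x\<in>carrier M. \<forall>y\<in>carrier M.
        smult M a (x \<oplus>\<^bsub>M\<^esub> y) = smult M a x \<oplus>\<^bsub>M\<^esub> smult M a y) \<and>
    (\<forall>a\<in>carrier R. \<forall>b\<in>carrier R. \<forall>x\<in>carrier M.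
        smult M (a \<otimes>\<^bsub>R\<^esub> b) x = smult M b (smult M a x)) \<and>
    (\<forall>x\<in>carrier M. smult M \<one>\<^bsub>R\<^esub> x = x)"

definition lin_map :: "('r, 'c) ring_scheme \<Rightarrow> ('r, 'm) module \<Rightarrow> ('r, 'n) module \<Rightarrow> ('m \<Rightarrow> 'n) \<Rightarrow> bool" where
  "lin_map R M N f \<longleftrightarrow> f \<in> carrier M \<rightarrow> carrier N \<and>
    (\<forall>x\<in>carrier M. \<forall>y\<in>carrier M. f (x \<oplus>\<^bsub>M\<^esub> y) = f x \<oplus>\<^bsub>N\<^esub> f y) \<and>
    (\<forall>a\<in>carrier R. \<forall>x\<in>carrier M. f (smult M a x) = smult N a (f x))"

definition free_left_module :: "('r, 'c) ring_scheme \<Rightarrow> 'i set \<Rightarrow> ('r, 'i \<Rightarrow> 'r) module" where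
  "free_left_module R I =
    \<lparr> carrier = {\<phi>. \<phi> \<in> I \<rightarrow>\<^sub>E carrier R \<and> finite {i\<in>I. \<phi> i \<noteq> \<zero>\<^bsub>R\<^esub>}},
      mult = (\<lambda>_ _. undefined), one = undefined,
      zero = (\<lambda>i\<in>I. \<zero>\<^bsub>R\<^esub>),
      add = (\<lambda>\<phi> \<psi>. \<lambda>i\<in>I. \<phi> i \<oplus>\<^bsub>R\<^esub> \<psi> i),
      smult = (\<lambda>a \<phi>. \<lambda>i\<in>I. a \<otimes>\<^bsub>R\<^esub> \<phi> i) \<rparr>"

definition free_right_module :: "('r, 'c) ring_scheme \<Rightarrow> 'i set \<Rightarrow> ('r, 'i \<Rightarrow> 'r) module" where
  "free_right_module R I =
    \<lparr> carrier = {\<phi>. \<phi> \<in> I \<rightarrow>\<^sub>E carrier R \<and> finite {i\<in>I. \<phi> i \<noteq> \<zero>\<^bsub>R\<^esub>}},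
      mult = (\<lambda>_ _. undefined), one = undefined,
      zero = (\<lambda>i\<in>I. \<zero>\<^bsub>R\<^esub>),
      add = (\<lambda>\<phi> \<psi>. \<lambda>i\<in>I. \<phi> i \<oplus>\<^bsub>R\<^esub> \<psi> i),
      smult = (\<lambda>a \<phi>. \<lambda>i\<in>I. \<phi> i \<otimes>\<^bsub>R\<^esub> a) \<rparr>"

text \<open>Projective = direct summand of a free module. The basis may be indexed by a
  subset of the element type of the module (R^(M) always suffices).\<close>
definition projective_left :: "('r, 'c) ring_scheme \<Rightarrow> ('r, 'm) module \<Rightarrow> bool" where
  "projective_left R M \<longleftrightarrow> left_module R M \<and>
    (\<exists>(I::'m set) i p. lin_map R M (free_left_module R I) i \<and>
        lin_map R (free_left_module R I) M p \<and> (\<forall>x\<in>carrier M. p (i x) = x))"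

definition projective_right :: "('r, 'c) ring_scheme \<Rightarrow> ('r, 'm) module \<Rightarrow> bool" where
  "projective_right R M \<longleftrightarrow> right_module R M \<and>
    (\<exists>(I::'m set) i p. lin_map R M (free_right_module R I) i \<and>
        lin_map R (free_right_module R I) M p \<and> (\<forall>x\<in>carrier M. p (i x) = x))"

definition dual_module :: "('r, 'c) ring_scheme \<Rightarrow> ('r, 'q) module \<Rightarrow> ('r, 'q \<Rightarrow> 'r) module" where
  "dual_module R Q =
    \<lparr> carrier = {f. f \<in> carrier Q \<rightarrow>\<^sub>E carrier R \<and>
                   (\<forall>x\<in>carrier Q. \<forall>y\<in>carrier Q. f (x \<oplus>\<^bsub>Q\<^esub> y) = f x \<oplus>\<^bsub>R\<^esub> f y) \<and>
                   (\<forall>a\<in>carrier R. \<forall>x\<in>carrier Q. f (smult Q a x) = f x \<otimes>\<^bsub>R\<^esub> a)},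
      mult = (\<lambda>_ _. undefined), one = undefined,
      zero = (\<lambda>x\<in>carrier Q. \<zero>\<^bsub>R\<^esub>),
      add = (\<lambda>f g. \<lambda>x\<in>carrier Q. f x \<oplus>\<^bsub>R\<^esub> g x),
      smult = (\<lambda>a f. \<lambda>x\<in>carrier Q. a \<otimes>\<^bsub>R\<^esub> f x) \<rparr>"

definition pointwise_topology :: "('r, 'c) ring_scheme \<Rightarrow> ('r, 'q) module \<Rightarrow> ('q \<Rightarrow> 'r) topology" where
  "pointwise_topology R Q =
     subtopology (product_topology (\<lambda>_. discrete_topology (carrier R)) (carrier Q))
                 (carrier (dual_module R Q))"

definition lspan :: "('r, 'c) ring_scheme \<Rightarrow> ('r, 'm) module \<Rightarrow> 'm set \<Rightarrow> 'm set" where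
  "lspan R M S = {finsum M (\<lambda>s. smult M (c s) s) S | c. c \<in> S \<rightarrow> carrier R}"

definition finitely_generated_image :: "('r, 'c) ring_scheme \<Rightarrow> ('r, 'm) module \<Rightarrow> 'm set \<Rightarrow> bool" where
  "finitely_generated_image R M A \<longleftrightarrow> (\<exists>S. finite S \<and> S \<subseteq> carrier M \<and> A = lspan R M S)"

end

(* A continuous linear map f from Q* to the discrete module P is constant on the cosets of the
   annihilator of some finite set F \<subseteq> Q.  Write Q as a direct summand of a free module R^(J), with
   section i and retraction p.  Every functional \<phi> then satisfies \<phi> q = \<Sum>j. \<phi> (p e_j) (i q)_j, and for
   q \<in> F only the finitely many indices j in the supports of the i q occur.  Hence \<phi> agrees on F
   with a linear combination of the finitely many coordinate functionals \<theta>_j = (\<lambda>q. (i q)_j), so f \<phi>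
   is a combination of the f \<theta>_j, and these generate the image of f. *)

theory Submission
  imports Defs "HOL-Algebra.AbelCoset"
begin

lemma left_module_abelian_group: "left_module R M \<Longrightarrow> abelian_group M"
  by (simp add: left_module_def)

lemma left_module_smult_closed:
  "left_module R M \<Longrightarrow> a \<in> carrier R \<Longrightarrow> x \<in> carrier M \<Longrightarrow> smult M a x \<in> carrier M"
  by (simp add: left_module_def)

lemma left_module_add_smult_distrib:
  "left_module R M \<Longrightarrow> a \<in> carrier R \<Longrightarrow> b \<in> carrier R \<Longrightarrow> x \<in> carrier M \<Longrightarrow>
    smult M (a \<oplus>\<^bsub>R\<^esub> b) x = smult M a x \<oplus>\<^bsub>M\<^esub> smult M b x"
  by (simp add: left_module_def)

lemma left_module_zero_smult:
  assumes "left_module R M" "x \<in> carrier M"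
  shows "smult M \<zero>\<^bsub>R\<^esub> x = \<zero>\<^bsub>M\<^esub>"
proof -
  interpret R: ring R using assms(1) by (simp add: left_module_def)
  interpret M: abelian_group M using assms(1) by (rule left_module_abelian_group)
  have closed: "smult M \<zero>\<^bsub>R\<^esub> x \<in> carrier M"
    using assms by (simp add: left_module_smult_closed)
  have "smult M \<zero>\<^bsub>R\<^esub> x \<oplus>\<^bsub>M\<^esub> smult M \<zero>\<^bsub>R\<^esub> x = smult M \<zero>\<^bsub>R\<^esub> x"
    using left_module_add_smult_distrib[OF assms(1) R.zero_closed R.zero_closed assms(2)] by simp
  then show ?thesis
    using M.add.l_cancel_one'[OF closed closed] by simp
qed

lemma right_module_ring: "right_module R M \<Longrightarrow> ring R"
  by (simp add: right_module_def)

lemma right_module_abelian_group: "right_module R M \<Longrightarrow> abelian_group M"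
  by (simp add: right_module_def)

lemma right_module_smult_closed:
  "right_module R M \<Longrightarrow> a \<in> carrier R \<Longrightarrow> x \<in> carrier M \<Longrightarrow> smult M a x \<in> carrier M"
  by (simp add: right_module_def)

lemma abelian_group_hom_additive:
  assumes "abelian_group G" "abelian_group H" "h \<in> carrier G \<rightarrow> carrier H"
    and "\<And>x y. x \<in> carrier G \<Longrightarrow> y \<in> carrier G \<Longrightarrow> h (x \<oplus>\<^bsub>G\<^esub> y) = h x \<oplus>\<^bsub>H\<^esub> h y"
  shows "abelian_group_hom G H h"
  using assms
  by (intro abelian_group_homI group_hom.intro group_hom_axioms.intro abelian_group.a_group)
    (auto simp: hom_def)

lemma (in abelian_group_hom) hom_finsum:
  assumes "finite K" "g \<in> K \<rightarrow> carrier G"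
  shows "h (\<Oplus>\<^bsub>G\<^esub>k\<in>K. g k) = (\<Oplus>\<^bsub>H\<^esub>k\<in>K. h (g k))"
  using assms
proof (induction K rule: finite_induct)
  case (insert k K)
  then have "(\<lambda>k. h (g k)) \<in> K \<rightarrow> carrier H"
    by (simp add: Pi_iff)
  with insert show ?case
    by (simp add: G.finsum_insert H.finsum_insert)
qed simp

section \<open>Groups of functions under pointwise addition\<close>

locale pointwise_abelian_group = R: abelian_group R
  for R :: "('r, 'c) ring_scheme" +
  fixes M :: "('i \<Rightarrow> 'r, 'd) ring_scheme" and I :: "'i set"
  assumes carrier_subset: "carrier M \<subseteq> I \<rightarrow>\<^sub>E carrier R"
    and zero_eq: "\<zero>\<^bsub>M\<^esub> = (\<lambda>i\<in>I. \<zero>\<^bsub>R\<^esub>)"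
    and add_eq: "\<And>f g. f \<oplus>\<^bsub>M\<^esub> g = (\<lambda>i\<in>I. f i \<oplus>\<^bsub>R\<^esub> g i)"
    and carrier_zero: "\<zero>\<^bsub>M\<^esub> \<in> carrier M"
    and carrier_add: "\<And>f g. f \<in> carrier M \<Longrightarrow> g \<in> carrier M \<Longrightarrow> f \<oplus>\<^bsub>M\<^esub> g \<in> carrier M"
    and carrier_neg: "\<And>f. f \<in> carrier M \<Longrightarrow> (\<lambda>i\<in>I. \<ominus>\<^bsub>R\<^esub> f i) \<in> carrier M"
begin

lemma carrier_apply: "f \<in> carrier M \<Longrightarrow> i \<in> I \<Longrightarrow> f i \<in> carrier R"
  using carrier_subset by blast

lemma restrict_carrier: "f \<in> carrier M \<Longrightarrow> restrict f I = f"
  using carrier_subset by (meson PiE_restrict subsetD)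

lemma abelian_group: "abelian_group M"
proof (rule abelian_groupI)
  fix f g h assume f: "f \<in> carrier M" and g: "g \<in> carrier M" and h: "h \<in> carrier M"
  show "f \<oplus>\<^bsub>M\<^esub> g \<oplus>\<^bsub>M\<^esub> h = f \<oplus>\<^bsub>M\<^esub> (g \<oplus>\<^bsub>M\<^esub> h)"
    using f g h by (auto simp: add_eq carrier_apply R.a_assoc intro!: restrict_ext)
  show "f \<oplus>\<^bsub>M\<^esub> g = g \<oplus>\<^bsub>M\<^esub> f"
    using f g by (auto simp: add_eq carrier_apply R.a_comm intro!: restrict_ext)
next
  fix f assume f: "f \<in> carrier M"
  have "\<zero>\<^bsub>M\<^esub> \<oplus>\<^bsub>M\<^esub> f = (\<lambda>i\<in>I. f i)"
    using f by (auto simp: add_eq zero_eq carrier_apply intro!: restrict_ext)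
  also have "\<dots> = f"
    using f by (rule restrict_carrier)
  finally show "\<zero>\<^bsub>M\<^esub> \<oplus>\<^bsub>M\<^esub> f = f" .
  show "\<exists>g\<in>carrier M. g \<oplus>\<^bsub>M\<^esub> f = \<zero>\<^bsub>M\<^esub>"
    using f carrier_neg by (intro bexI[of _ "\<lambda>i\<in>I. \<ominus>\<^bsub>R\<^esub> f i"])
      (auto simp: add_eq zero_eq carrier_apply R.l_neg intro!: restrict_ext)
qed (use carrier_zero carrier_add in auto)

sublocale M: abelian_group M
  by (rule abelian_group)

lemma finsum_apply:
  assumes "finite K" "g \<in> K \<rightarrow> carrier M" "i \<in> I"
  shows "(\<Oplus>\<^bsub>M\<^esub>k\<in>K. g k) i = (\<Oplus>\<^bsub>R\<^esub>k\<in>K. g k i)"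
  using assms
proof (induction K rule: finite_induct)
  case empty
  then show ?case by (simp add: zero_eq)
next
  case (insert k K)
  then have "g k i \<in> carrier R" "(\<lambda>k. g k i) \<in> K \<rightarrow> carrier R"
    using carrier_apply by auto
  with insert show ?case
    by (simp add: M.finsum_insert R.finsum_insert add_eq)
qed

end

section \<open>The dual module\<close>

lemma dual_module_ops:
  "\<zero>\<^bsub>dual_module R Q\<^esub> = (\<lambda>x\<in>carrier Q. \<zero>\<^bsub>R\<^esub>)"
  "f \<oplus>\<^bsub>dual_module R Q\<^esub> g = (\<lambda>x\<in>carrier Q. f x \<oplus>\<^bsub>R\<^esub> g x)"
  "smult (dual_module R Q) a f = (\<lambda>x\<in>carrier Q. a \<otimes>\<^bsub>R\<^esub> f x)"
  by (simp_all add: dual_module_def)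

lemma dual_module_apply_closed:
  "\<phi> \<in> carrier (dual_module R Q) \<Longrightarrow> x \<in> carrier Q \<Longrightarrow> \<phi> x \<in> carrier R"
  by (auto simp: dual_module_def)

lemma dual_module_apply_add:
  "\<phi> \<in> carrier (dual_module R Q) \<Longrightarrow> x \<in> carrier Q \<Longrightarrow> y \<in> carrier Q \<Longrightarrow>
    \<phi> (x \<oplus>\<^bsub>Q\<^esub> y) = \<phi> x \<oplus>\<^bsub>R\<^esub> \<phi> y"
  by (simp add: dual_module_def)

lemma dual_module_apply_smult:
  "\<phi> \<in> carrier (dual_module R Q) \<Longrightarrow> a \<in> carrier R \<Longrightarrow> x \<in> carrier Q \<Longrightarrow>
    \<phi> (smult Q a x) = \<phi> x \<otimes>\<^bsub>R\<^esub> a"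
  by (simp add: dual_module_def)

lemma pointwise_abelian_group_dual_module:
  assumes "right_module R Q"
  shows "pointwise_abelian_group R (dual_module R Q) (carrier Q)"
proof -
  interpret R: ring R using assms by (rule right_module_ring)
  interpret Q: abelian_group Q using assms by (rule right_module_abelian_group)
  note smult_closed = right_module_smult_closed[OF assms]
  note closed = dual_module_apply_closed
  show ?thesis
  proof unfold_locales
    fix f g assume f: "f \<in> carrier (dual_module R Q)" and g: "g \<in> carrier (dual_module R Q)"
    show "f \<oplus>\<^bsub>dual_module R Q\<^esub> g \<in> carrier (dual_module R Q)"
      using closed[OF f] closed[OF g] f g
      by (auto simp: dual_module_def smult_closed R.a_ac R.l_distr)
  next
    fix f assume f: "f \<in> carrier (dual_module R Q)"
    show "(\<lambda>x\<in>carrier Q. \<ominus>\<^bsub>R\<^esub> f x) \<in> carrier (dual_module R Q)"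
      using closed[OF f] f by (auto simp: dual_module_def smult_closed R.minus_add R.l_minus)
  qed (auto simp: dual_module_def smult_closed)
qed

lemma left_module_dual_module:
  assumes "right_module R Q"
  shows "left_module R (dual_module R Q)"
proof -
  interpret R: ring R using assms by (rule right_module_ring)
  interpret Q: abelian_group Q using assms by (rule right_module_abelian_group)
  interpret D: pointwise_abelian_group R "dual_module R Q" "carrier Q"
    using assms by (rule pointwise_abelian_group_dual_module)
  note smult_closed = right_module_smult_closed[OF assms]
  note closed = dual_module_apply_closed
  have "smult (dual_module R Q) a f \<in> carrier (dual_module R Q)"
    if a: "a \<in> carrier R" and f: "f \<in> carrier (dual_module R Q)" for a f
    using closed[OF f] a f by (auto simp: dual_module_def smult_closed R.r_distr R.m_assoc)
  moreover have "smult (dual_module R Q) \<one>\<^bsub>R\<^esub> f = f" if f: "f \<in> carrier (dual_module R Q)" for f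
  proof -
    have "smult (dual_module R Q) \<one>\<^bsub>R\<^esub> f = restrict f (carrier Q)"
      using closed[OF f] by (auto simp: dual_module_def intro!: restrict_ext)
    then show ?thesis
      using f by (simp add: D.restrict_carrier)
  qed
  ultimately show ?thesis
    unfolding left_module_def using D.carrier_apply D.carrier_add
    by (auto simp: R.ring_axioms D.abelian_group dual_module_ops R.r_distr R.l_distr R.m_assoc
        intro!: restrict_ext)
qed

lemma dual_module_lincomb_apply:
  assumes "right_module R Q" "finite K" "c \<in> K \<rightarrow> carrier R"
    and "\<theta> \<in> K \<rightarrow> carrier (dual_module R Q)" "q \<in> carrier Q"
  shows "(\<Oplus>\<^bsub>dual_module R Q\<^esub>k\<in>K. smult (dual_module R Q) (c k) (\<theta> k)) q
    = (\<Oplus>\<^bsub>R\<^esub>k\<in>K. c k \<otimes>\<^bsub>R\<^esub> \<theta> k q)"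
proof -
  interpret D: pointwise_abelian_group R "dual_module R Q" "carrier Q"
    using assms(1) by (rule pointwise_abelian_group_dual_module)
  have "(\<lambda>k. smult (dual_module R Q) (c k) (\<theta> k)) \<in> K \<rightarrow> carrier (dual_module R Q)"
    using assms(3,4) by (blast intro: left_module_smult_closed[OF left_module_dual_module[OF assms(1)]])
  then show ?thesis
    using assms(2,5) by (simp add: D.finsum_apply dual_module_ops)
qed

lemma dual_module_precomp:
  assumes "right_module R M" "lin_map R M N p" "\<phi> \<in> carrier (dual_module R N)"
  shows "(\<lambda>x\<in>carrier M. \<phi> (p x)) \<in> carrier (dual_module R M)"
proof -
  interpret M: abelian_group M using assms(1) by (rule right_module_abelian_group)
  have p: "p x \<in> carrier N" if "x \<in> carrier M" for x
    using assms(2) that by (auto simp: lin_map_def)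
  show ?thesis
    using assms(2,3) p right_module_smult_closed[OF assms(1)]
    by (auto simp: dual_module_def lin_map_def)
qed

lemma dual_module_abelian_group_hom:
  assumes "right_module R M" "\<phi> \<in> carrier (dual_module R M)"
  shows "abelian_group_hom M R \<phi>"
proof (rule abelian_group_hom_additive)
  show "abelian_group M"
    using assms(1) by (rule right_module_abelian_group)
  show "abelian_group R"
    using assms(1) by (intro ring.is_abelian_group right_module_ring)
  show "\<phi> \<in> carrier M \<rightarrow> carrier R"
    using dual_module_apply_closed[OF assms(2)] by blast
  show "\<And>x y. x \<in> carrier M \<Longrightarrow> y \<in> carrier M \<Longrightarrow> \<phi> (x \<oplus>\<^bsub>M\<^esub> y) = \<phi> x \<oplus>\<^bsub>R\<^esub> \<phi> y"
    using assms(2) by (rule dual_module_apply_add)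
qed

section \<open>Free right modules\<close>

lemma free_right_module_ops:
  "v \<oplus>\<^bsub>free_right_module R J\<^esub> w = (\<lambda>j\<in>J. v j \<oplus>\<^bsub>R\<^esub> w j)"
  "smult (free_right_module R J) a v = (\<lambda>j\<in>J. v j \<otimes>\<^bsub>R\<^esub> a)"
  by (simp_all add: free_right_module_def)

lemma free_right_module_memI:
  assumes "v \<in> J \<rightarrow>\<^sub>E carrier R" "finite K" "\<And>j. j \<in> J \<Longrightarrow> v j \<noteq> \<zero>\<^bsub>R\<^esub> \<Longrightarrow> j \<in> K"
  shows "v \<in> carrier (free_right_module R J)"
proof -
  have "{j\<in>J. v j \<noteq> \<zero>\<^bsub>R\<^esub>} \<subseteq> K"
    using assms(3) by blast
  then show ?thesis
    using assms(1,2) by (simp add: free_right_module_def finite_subset)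
qed

lemma free_right_module_support_finite:
  "v \<in> carrier (free_right_module R J) \<Longrightarrow> finite {j\<in>J. v j \<noteq> \<zero>\<^bsub>R\<^esub>}"
  by (simp add: free_right_module_def)

lemma pointwise_abelian_group_free_right_module:
  assumes "ring R"
  shows "pointwise_abelian_group R (free_right_module R J) J"
proof -
  interpret R: ring R by fact
  note support_finite = free_right_module_support_finite
  show ?thesis
  proof unfold_locales
    fix v w assume v: "v \<in> carrier (free_right_module R J)" and w: "w \<in> carrier (free_right_module R J)"
    then show "v \<oplus>\<^bsub>free_right_module R J\<^esub> w \<in> carrier (free_right_module R J)"
      using support_finite[OF v] support_finite[OF w]
      by (intro free_right_module_memI[where K = "{j\<in>J. v j \<noteq> \<zero>\<^bsub>R\<^esub>} \<union> {j\<in>J. w j \<noteq> \<zero>\<^bsub>R\<^esub>}"])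
        (auto simp: free_right_module_def)
  next
    fix v assume v: "v \<in> carrier (free_right_module R J)"
    then show "(\<lambda>j\<in>J. \<ominus>\<^bsub>R\<^esub> v j) \<in> carrier (free_right_module R J)"
      using support_finite[OF v]
      by (intro free_right_module_memI[where K = "{j\<in>J. v j \<noteq> \<zero>\<^bsub>R\<^esub>}"])
        (auto simp: free_right_module_def)
  qed (auto simp: free_right_module_def)
qed

lemma right_module_free_right_module:
  assumes "ring R"
  shows "right_module R (free_right_module R J)"
proof -
  interpret R: ring R by fact
  interpret F: pointwise_abelian_group R "free_right_module R J" J
    using assms by (rule pointwise_abelian_group_free_right_module)
  note ops = free_right_module_ops
  show ?thesis
    unfolding right_module_def
  proof (intro conjI ballI)
    fix a v assume a: "a \<in> carrier R" and v: "v \<in> carrier (free_right_module R J)"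
    then show "smult (free_right_module R J) a v \<in> carrier (free_right_module R J)"
      using free_right_module_support_finite[OF v]
      by (intro free_right_module_memI[where K = "{j\<in>J. v j \<noteq> \<zero>\<^bsub>R\<^esub>}"])
        (auto simp: free_right_module_def)
  next
    fix a b v assume "a \<in> carrier R" "b \<in> carrier R" "v \<in> carrier (free_right_module R J)"
    then show "smult (free_right_module R J) (a \<oplus>\<^bsub>R\<^esub> b) v
        = smult (free_right_module R J) a v \<oplus>\<^bsub>free_right_module R J\<^esub> smult (free_right_module R J) b v"
      unfolding ops by (intro restrict_ext) (simp add: F.carrier_apply R.r_distr)
  next
    fix a v w assume "a \<in> carrier R" "v \<in> carrier (free_right_module R J)" "w \<in> carrier (free_right_module R J)"
    then show "smult (free_right_module R J) a (v \<oplus>\<^bsub>free_right_module R J\<^esub> w)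
        = smult (free_right_module R J) a v \<oplus>\<^bsub>free_right_module R J\<^esub> smult (free_right_module R J) a w"
      unfolding ops by (intro restrict_ext) (simp add: F.carrier_apply R.l_distr)
  next
    fix a b v assume "a \<in> carrier R" "b \<in> carrier R" "v \<in> carrier (free_right_module R J)"
    then show "smult (free_right_module R J) (a \<otimes>\<^bsub>R\<^esub> b) v
        = smult (free_right_module R J) b (smult (free_right_module R J) a v)"
      unfolding ops by (intro restrict_ext) (simp add: F.carrier_apply R.m_assoc)
  next
    fix v assume v: "v \<in> carrier (free_right_module R J)"
    then have "smult (free_right_module R J) \<one>\<^bsub>R\<^esub> v = restrict v J"
      unfolding ops by (intro restrict_ext) (simp add: F.carrier_apply)
    then show "smult (free_right_module R J) \<one>\<^bsub>R\<^esub> v = v"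
      using v by (simp add: F.restrict_carrier)
  qed (use assms F.abelian_group in auto)
qed

definition free_basis :: "('r, 'c) ring_scheme \<Rightarrow> 'i set \<Rightarrow> 'i \<Rightarrow> 'i \<Rightarrow> 'r" where
  "free_basis R J j = (\<lambda>k\<in>J. if k = j then \<one>\<^bsub>R\<^esub> else \<zero>\<^bsub>R\<^esub>)"

lemma free_basis_carrier:
  assumes "ring R" "j \<in> J"
  shows "free_basis R J j \<in> carrier (free_right_module R J)"
proof -
  interpret R: ring R by fact
  show ?thesis
    by (rule free_right_module_memI[where K = "{j}"]) (auto simp: free_basis_def split: if_splits)
qed

lemma free_right_module_expansion:
  assumes "ring R" "v \<in> carrier (free_right_module R J)" "finite K" "K \<subseteq> J"
    and "\<forall>j\<in>J - K. v j = \<zero>\<^bsub>R\<^esub>"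
  shows "v = (\<Oplus>\<^bsub>free_right_module R J\<^esub>j\<in>K. smult (free_right_module R J) (v j) (free_basis R J j))"
    (is "v = ?sum")
proof -
  interpret R: ring R by fact
  interpret F: pointwise_abelian_group R "free_right_module R J" J
    using assms(1) by (rule pointwise_abelian_group_free_right_module)
  note v_apply = F.carrier_apply[OF assms(2)]
  have terms: "(\<lambda>j. smult (free_right_module R J) (v j) (free_basis R J j)) \<in> K \<rightarrow> carrier (free_right_module R J)"
  proof
    fix j assume "j \<in> K"
    then have j: "j \<in> J" using assms(4) by blast
    show "smult (free_right_module R J) (v j) (free_basis R J j) \<in> carrier (free_right_module R J)"
      using right_module_free_right_module[OF assms(1)] v_apply[OF j] free_basis_carrier[OF assms(1) j]
      by (rule right_module_smult_closed)
  qed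
  have pointwise: "v i = ?sum i" if i: "i \<in> J" for i
  proof -
    have "?sum i = (\<Oplus>\<^bsub>R\<^esub>j\<in>K. smult (free_right_module R J) (v j) (free_basis R J j) i)"
      using assms(3) terms i by (rule F.finsum_apply)
    also have "\<dots> = (\<Oplus>\<^bsub>R\<^esub>j\<in>K. if i = j then v j else \<zero>\<^bsub>R\<^esub>)"
      using i assms(4) v_apply
      by (intro R.finsum_cong') (auto simp: free_right_module_ops free_basis_def)
    finally have "?sum i = (\<Oplus>\<^bsub>R\<^esub>j\<in>K. if i = j then v j else \<zero>\<^bsub>R\<^esub>)" .
    also have "\<dots> = v i"
    proof (cases "i \<in> K")
      case True
      then show ?thesis
        using assms(3,4) v_apply by (intro R.finsum_singleton) auto
    next
      case False
      then have "(\<Oplus>\<^bsub>R\<^esub>j\<in>K. if i = j then v j else \<zero>\<^bsub>R\<^esub>) = (\<Oplus>\<^bsub>R\<^esub>j\<in>K. \<zero>\<^bsub>R\<^esub>)"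
        by (intro R.finsum_cong') auto
      then show ?thesis
        using i False assms(5) by simp
    qed
    finally show ?thesis by simp
  qed
  show ?thesis
  proof (rule PiE_ext)
    show "v \<in> J \<rightarrow>\<^sub>E carrier R"
      using assms(2) F.carrier_subset by blast
    have "?sum \<in> carrier (free_right_module R J)"
      using terms by (rule F.M.finsum_closed)
    then show "?sum \<in> J \<rightarrow>\<^sub>E carrier R"
      using F.carrier_subset by blast
  qed (rule pointwise)
qed

lemma free_right_module_coordinate_dual:
  assumes "ring R" "j \<in> J"
  shows "(\<lambda>v\<in>carrier (free_right_module R J). v j) \<in> carrier (dual_module R (free_right_module R J))"
proof -
  interpret F: pointwise_abelian_group R "free_right_module R J" J
    using assms(1) by (rule pointwise_abelian_group_free_right_module)
  note smult_closed = right_module_smult_closed[OF right_module_free_right_module[OF assms(1), where J = J]]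
  show ?thesis
    using assms(2) F.carrier_apply F.carrier_add smult_closed
    by (simp add: dual_module_def free_right_module_ops)
qed

lemma dual_free_right_module_expansion:
  assumes "ring R" "g \<in> carrier (dual_module R (free_right_module R J))"
    and "v \<in> carrier (free_right_module R J)" "finite K" "K \<subseteq> J" "\<forall>j\<in>J - K. v j = \<zero>\<^bsub>R\<^esub>"
  shows "g v = (\<Oplus>\<^bsub>R\<^esub>j\<in>K. g (free_basis R J j) \<otimes>\<^bsub>R\<^esub> v j)"
proof -
  interpret R: ring R by fact
  have free: "right_module R (free_right_module R J)"
    using assms(1) by (rule right_module_free_right_module)
  interpret g: abelian_group_hom "free_right_module R J" R g
    using free assms(2) by (rule dual_module_abelian_group_hom)
  have v_apply: "v j \<in> carrier R" if "j \<in> K" for j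
    using assms(3,5) that by (auto simp: free_right_module_def)
  have basis: "free_basis R J j \<in> carrier (free_right_module R J)" if "j \<in> K" for j
    using assms(1,5) that by (auto intro: free_basis_carrier)
  have "g v = g (\<Oplus>\<^bsub>free_right_module R J\<^esub>j\<in>K. smult (free_right_module R J) (v j) (free_basis R J j))"
    by (rule arg_cong[OF free_right_module_expansion[OF assms(1,3-6)]])
  also have "\<dots> = (\<Oplus>\<^bsub>R\<^esub>j\<in>K. g (smult (free_right_module R J) (v j) (free_basis R J j)))"
    using assms(4,5) basis v_apply right_module_smult_closed[OF free]
    by (intro g.hom_finsum) auto
  also have "\<dots> = (\<Oplus>\<^bsub>R\<^esub>j\<in>K. g (free_basis R J j) \<otimes>\<^bsub>R\<^esub> v j)"
    using assms(5) basis v_apply dual_module_apply_smult[OF assms(2)] by (intro R.finsum_cong) auto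
  finally show ?thesis .
qed

section \<open>Finitely generated submodules and linear maps\<close>

lemma lspan_closed:
  assumes "left_module R M" "S \<subseteq> carrier M"
  shows "lspan R M S \<subseteq> carrier M"
proof
  interpret M: abelian_group M using assms(1) by (rule left_module_abelian_group)
  fix x assume "x \<in> lspan R M S"
  then obtain c where c: "c \<in> S \<rightarrow> carrier R" and x: "x = (\<Oplus>\<^bsub>M\<^esub>s\<in>S. smult M (c s) s)"
    unfolding lspan_def by blast
  have "(\<lambda>s. smult M (c s) s) \<in> S \<rightarrow> carrier M"
    using c assms by (auto intro: left_module_smult_closed)
  then show "x \<in> carrier M"
    unfolding x by (rule M.finsum_closed)
qed

lemma lspan_zero:
  assumes "left_module R M" "S \<subseteq> carrier M"
  shows "\<zero>\<^bsub>M\<^esub> \<in> lspan R M S"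
proof -
  interpret R: ring R using assms(1) by (simp add: left_module_def)
  interpret M: abelian_group M using assms(1) by (rule left_module_abelian_group)
  have "(\<Oplus>\<^bsub>M\<^esub>s\<in>S. smult M \<zero>\<^bsub>R\<^esub> s) = (\<Oplus>\<^bsub>M\<^esub>s\<in>S. \<zero>\<^bsub>M\<^esub>)"
    using assms by (intro M.finsum_cong') (auto simp: left_module_zero_smult)
  then have "\<zero>\<^bsub>M\<^esub> = (\<Oplus>\<^bsub>M\<^esub>s\<in>S. smult M ((\<lambda>_. \<zero>\<^bsub>R\<^esub>) s) s)"
    by simp
  then show ?thesis
    unfolding lspan_def by fastforce
qed

lemma lspan_add:
  assumes "left_module R M" "S \<subseteq> carrier M" "x \<in> lspan R M S" "y \<in> lspan R M S"
  shows "x \<oplus>\<^bsub>M\<^esub> y \<in> lspan R M S"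
proof -
  interpret R: ring R using assms(1) by (simp add: left_module_def)
  interpret M: abelian_group M using assms(1) by (rule left_module_abelian_group)
  obtain c where c: "c \<in> S \<rightarrow> carrier R" and x: "x = (\<Oplus>\<^bsub>M\<^esub>s\<in>S. smult M (c s) s)"
    using assms(3) unfolding lspan_def by blast
  obtain d where d: "d \<in> S \<rightarrow> carrier R" and y: "y = (\<Oplus>\<^bsub>M\<^esub>s\<in>S. smult M (d s) s)"
    using assms(4) unfolding lspan_def by blast
  have terms: "(\<lambda>s. smult M (e s) s) \<in> S \<rightarrow> carrier M" if "e \<in> S \<rightarrow> carrier R" for e
    using that assms(2) by (auto intro: left_module_smult_closed[OF assms(1)])
  have "x \<oplus>\<^bsub>M\<^esub> y = (\<Oplus>\<^bsub>M\<^esub>s\<in>S. smult M (c s) s \<oplus>\<^bsub>M\<^esub> smult M (d s) s)"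
    unfolding x y using terms[OF c] terms[OF d] by (rule M.finsum_addf[symmetric])
  also have "\<dots> = (\<Oplus>\<^bsub>M\<^esub>s\<in>S. smult M (c s \<oplus>\<^bsub>R\<^esub> d s) s)"
  proof (rule M.finsum_cong')
    show "(\<lambda>s. smult M (c s \<oplus>\<^bsub>R\<^esub> d s) s) \<in> S \<rightarrow> carrier M"
      using c d by (intro terms) auto
    fix s assume s: "s \<in> S"
    then have "c s \<in> carrier R" "d s \<in> carrier R" "s \<in> carrier M"
      using c d assms(2) by auto
    then show "smult M (c s) s \<oplus>\<^bsub>M\<^esub> smult M (d s) s = smult M (c s \<oplus>\<^bsub>R\<^esub> d s) s"
      by (rule left_module_add_smult_distrib[OF assms(1), symmetric])
  qed simp
  finally show ?thesis
    using c d unfolding lspan_def by fastforce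
qed

lemma lspan_smult_generator:
  assumes "left_module R M" "finite S" "S \<subseteq> carrier M" "s \<in> S" "a \<in> carrier R"
  shows "smult M a s \<in> lspan R M S"
proof -
  interpret R: ring R using assms(1) by (simp add: left_module_def)
  interpret M: abelian_group M using assms(1) by (rule left_module_abelian_group)
  have smult_closed: "smult M b t \<in> carrier M" if "b \<in> carrier R" "t \<in> S" for b t
    using that assms(3) by (blast intro: left_module_smult_closed[OF assms(1)])
  define c where "c t = (if t = s then a else \<zero>\<^bsub>R\<^esub>)" for t
  have c: "c \<in> S \<rightarrow> carrier R"
    using assms(5) by (simp add: c_def)
  have "(\<Oplus>\<^bsub>M\<^esub>t\<in>S. smult M (c t) t) = (\<Oplus>\<^bsub>M\<^esub>t\<in>S. if s = t then smult M a t else \<zero>\<^bsub>M\<^esub>)"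
    using assms smult_closed by (intro M.finsum_cong') (auto simp: c_def left_module_zero_smult)
  also have "\<dots> = smult M a s"
    using assms smult_closed by (intro M.finsum_singleton) auto
  finally show ?thesis
    unfolding lspan_def using c by (intro CollectI exI[where x = c] conjI) simp_all
qed

lemma lspan_lincomb:
  assumes "left_module R M" "finite S" "S \<subseteq> carrier M"
    and "finite K" "c \<in> K \<rightarrow> carrier R" "g \<in> K \<rightarrow> S"
  shows "(\<Oplus>\<^bsub>M\<^esub>k\<in>K. smult M (c k) (g k)) \<in> lspan R M S"
proof -
  interpret M: abelian_group M using assms(1) by (rule left_module_abelian_group)
  show ?thesis
    using assms(4-6)
  proof (induction K rule: finite_induct)
    case empty
    then show ?case
      using lspan_zero[OF assms(1,3)] by simp
  next
    case (insert k K)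
    have "(\<lambda>k. smult M (c k) (g k)) \<in> insert k K \<rightarrow> carrier M"
      using insert.prems assms(3) by (blast intro: left_module_smult_closed[OF assms(1)])
    then have "(\<Oplus>\<^bsub>M\<^esub>k\<in>insert k K. smult M (c k) (g k))
        = smult M (c k) (g k) \<oplus>\<^bsub>M\<^esub> (\<Oplus>\<^bsub>M\<^esub>k\<in>K. smult M (c k) (g k))"
      using insert.hyps by (simp add: M.finsum_insert)
    also have "\<dots> \<in> lspan R M S"
      using insert assms(1-3)
      by (intro lspan_add lspan_smult_generator) auto
    finally show ?case .
  qed
qed

lemma lin_map_abelian_group_hom:
  assumes "left_module R M" "left_module R N" "lin_map R M N f"
  shows "abelian_group_hom M N f"
  using assms(3)
  by (intro abelian_group_hom_additive left_module_abelian_group[OF assms(1)]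
      left_module_abelian_group[OF assms(2)]) (auto simp: lin_map_def)

lemma lin_map_lincomb:
  assumes "left_module R M" "left_module R N" "lin_map R M N f"
    and "finite K" "c \<in> K \<rightarrow> carrier R" "g \<in> K \<rightarrow> carrier M"
  shows "f (\<Oplus>\<^bsub>M\<^esub>k\<in>K. smult M (c k) (g k)) = (\<Oplus>\<^bsub>N\<^esub>k\<in>K. smult N (c k) (f (g k)))"
proof -
  interpret f: abelian_group_hom M N f
    using assms(1-3) by (rule lin_map_abelian_group_hom)
  have "f (\<Oplus>\<^bsub>M\<^esub>k\<in>K. smult M (c k) (g k)) = (\<Oplus>\<^bsub>N\<^esub>k\<in>K. f (smult M (c k) (g k)))"
    using assms(4-6) by (intro f.hom_finsum) (auto intro: left_module_smult_closed[OF assms(1)])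
  also have "\<dots> = (\<Oplus>\<^bsub>N\<^esub>k\<in>K. smult N (c k) (f (g k)))"
  proof (rule f.H.finsum_cong')
    show "(\<lambda>k. smult N (c k) (f (g k))) \<in> K \<rightarrow> carrier N"
      using assms(5,6) by (blast intro: left_module_smult_closed[OF assms(2)] f.hom_closed)
    fix k assume "k \<in> K"
    then show "f (smult M (c k) (g k)) = smult N (c k) (f (g k))"
      using assms(3,5,6) by (auto simp: lin_map_def)
  qed simp
  finally show ?thesis .
qed

lemma lin_map_image_lspan:
  assumes "left_module R M" "left_module R N" "lin_map R M N f"
    and "finite S" "S \<subseteq> carrier M"
  shows "f ` lspan R M S \<subseteq> lspan R N (f ` S)"
proof
  have fS: "f ` S \<subseteq> carrier N"
    using assms(3,5) by (auto simp: lin_map_def)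
  fix y assume "y \<in> f ` lspan R M S"
  then obtain c where c: "c \<in> S \<rightarrow> carrier R" and y: "y = f (\<Oplus>\<^bsub>M\<^esub>s\<in>S. smult M (c s) s)"
    unfolding lspan_def by blast
  have "y = (\<Oplus>\<^bsub>N\<^esub>s\<in>S. smult N (c s) (f s))"
    unfolding y using assms(5) by (intro lin_map_lincomb[OF assms(1-4) c, of "\<lambda>s. s"]) blast
  also have "\<dots> \<in> lspan R N (f ` S)"
    using finite_imageI[OF assms(4)] fS assms(4) c by (rule lspan_lincomb[OF assms(2)]) blast
  finally show "y \<in> lspan R N (f ` S)" .
qed

lemma lspan_subset_lin_map_image:
  assumes "left_module R M" "left_module R N" "lin_map R M N f"
    and "finite S" "S \<subseteq> f ` carrier M"
  shows "lspan R N S \<subseteq> f ` carrier M"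
proof
  interpret M: abelian_group M using assms(1) by (rule left_module_abelian_group)
  interpret N: abelian_group N using assms(2) by (rule left_module_abelian_group)
  have "\<forall>s\<in>S. \<exists>x. x \<in> carrier M \<and> f x = s"
    using assms(5) by blast
  then obtain g where g: "\<forall>s\<in>S. g s \<in> carrier M \<and> f (g s) = s"
    by (rule bchoice[THEN exE])
  fix y assume "y \<in> lspan R N S"
  then obtain c where c: "c \<in> S \<rightarrow> carrier R" and y: "y = (\<Oplus>\<^bsub>N\<^esub>s\<in>S. smult N (c s) s)"
    unfolding lspan_def by blast
  have g_carrier: "g \<in> S \<rightarrow> carrier M"
    using g by blast
  have S_carrier: "S \<subseteq> carrier N"
    using assms(3,5) by (auto simp: lin_map_def)
  have "y = (\<Oplus>\<^bsub>N\<^esub>s\<in>S. smult N (c s) (f (g s)))"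
    unfolding y using g S_carrier
    by (intro N.finsum_cong') (auto intro!: left_module_smult_closed[OF assms(2)] funcset_mem[OF c])
  also have "\<dots> = f (\<Oplus>\<^bsub>M\<^esub>s\<in>S. smult M (c s) (g s))"
    using assms(1-4) c g_carrier by (rule lin_map_lincomb[symmetric])
  also have "\<dots> \<in> f ` carrier M"
    using c g_carrier by (intro imageI M.finsum_closed) (blast intro: left_module_smult_closed[OF assms(1)])
  finally show "y \<in> f ` carrier M" .
qed

section \<open>The topology of pointwise convergence\<close>

lemma topspace_pointwise_topology:
  "topspace (pointwise_topology R Q) = carrier (dual_module R Q)"
  unfolding pointwise_topology_def by (auto simp: dual_module_def)

lemma openin_pointwise_topology_finite_determined:
  assumes "openin (pointwise_topology R Q) U" "z \<in> U"
  obtains F where "finite F" "F \<subseteq> carrier Q"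
    "\<And>\<phi>. \<phi> \<in> carrier (dual_module R Q) \<Longrightarrow> \<forall>q\<in>F. \<phi> q = z q \<Longrightarrow> \<phi> \<in> U"
proof -
  let ?T = "product_topology (\<lambda>_. discrete_topology (carrier R)) (carrier Q)"
  obtain V where V: "openin ?T V" and U: "U = V \<inter> carrier (dual_module R Q)"
    using assms(1) unfolding pointwise_topology_def openin_subtopology by blast
  have "z \<in> V"
    using assms(2) U by blast
  then obtain B where z_B: "z \<in> (\<Pi>\<^sub>E q\<in>carrier Q. B q)"
    and B_finite: "finite {q. B q \<noteq> carrier R}" and B_V: "(\<Pi>\<^sub>E q\<in>carrier Q. B q) \<subseteq> V"
    using product_topology_open_contains_basis[OF V \<open>z \<in> V\<close>] by auto
  show ?thesis
  proof
    show "finite {q \<in> carrier Q. B q \<noteq> carrier R}"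
      using B_finite by (rule rev_finite_subset) blast
    fix \<phi> assume \<phi>: "\<phi> \<in> carrier (dual_module R Q)"
      and agree: "\<forall>q\<in>{q \<in> carrier Q. B q \<noteq> carrier R}. \<phi> q = z q"
    have "\<phi> \<in> (\<Pi>\<^sub>E q\<in>carrier Q. B q)"
    proof (rule PiE_I)
      fix q assume q: "q \<in> carrier Q"
      show "\<phi> q \<in> B q"
        using dual_module_apply_closed[OF \<phi> q] agree z_B q by (cases "B q = carrier R") auto
    next
      fix q assume "q \<notin> carrier Q"
      then show "\<phi> q = undefined"
        using \<phi> by (auto simp: dual_module_def)
    qed
    then show "\<phi> \<in> U"
      using B_V U \<phi> by blast
  qed blast
qed

lemma continuous_map_pointwise_topology_discrete:
  assumes "continuous_map (pointwise_topology R Q) (discrete_topology X) f"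
    and "z \<in> carrier (dual_module R Q)"
  obtains F where "finite F" "F \<subseteq> carrier Q"
    "\<And>\<phi>. \<phi> \<in> carrier (dual_module R Q) \<Longrightarrow> \<forall>q\<in>F. \<phi> q = z q \<Longrightarrow> f \<phi> = f z"
proof -
  have "f z \<in> X"
    using continuous_map_image_subset_topspace[OF assms(1)] assms(2)
    by (auto simp: topspace_pointwise_topology)
  then have "openin (pointwise_topology R Q) {\<phi> \<in> carrier (dual_module R Q). f \<phi> \<in> {f z}}"
    using openin_continuous_map_preimage[OF assms(1), of "{f z}"]
    by (simp add: topspace_pointwise_topology)
  moreover have "z \<in> {\<phi> \<in> carrier (dual_module R Q). f \<phi> \<in> {f z}}"
    using assms(2) by blast
  ultimately show ?thesis
  proof (rule openin_pointwise_topology_finite_determined)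
    fix F assume F: "finite F" "F \<subseteq> carrier Q"
      and near: "\<And>\<phi>. \<phi> \<in> carrier (dual_module R Q) \<Longrightarrow> \<forall>q\<in>F. \<phi> q = z q \<Longrightarrow>
        \<phi> \<in> {\<phi> \<in> carrier (dual_module R Q). f \<phi> \<in> {f z}}"
    show ?thesis
    proof (rule that[OF F])
      fix \<phi> assume "\<phi> \<in> carrier (dual_module R Q)" "\<forall>q\<in>F. \<phi> q = z q"
      then show "f \<phi> = f z"
        using near by blast
    qed
  qed
qed

lemma continuous_lin_map_finitely_determined:
  assumes "right_module R Q" "left_module R P" "lin_map R (dual_module R Q) P f"
    and "continuous_map (pointwise_topology R Q) (discrete_topology (carrier P)) f"
  obtains F where "finite F" "F \<subseteq> carrier Q"
    "\<And>\<phi> \<psi>. \<phi> \<in> carrier (dual_module R Q) \<Longrightarrow> \<psi> \<in> carrier (dual_module R Q) \<Longrightarrow>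
      \<forall>q\<in>F. \<phi> q = \<psi> q \<Longrightarrow> f \<phi> = f \<psi>"
proof -
  interpret R: ring R using assms(1) by (rule right_module_ring)
  interpret D: pointwise_abelian_group R "dual_module R Q" "carrier Q"
    using assms(1) by (rule pointwise_abelian_group_dual_module)
  interpret f: abelian_group_hom "dual_module R Q" P f
    using left_module_dual_module[OF assms(1)] assms(2,3) by (rule lin_map_abelian_group_hom)
  obtain F where F: "finite F" "F \<subseteq> carrier Q"
    and near_zero: "\<And>\<delta>. \<delta> \<in> carrier (dual_module R Q) \<Longrightarrow> \<forall>q\<in>F. \<delta> q = \<zero>\<^bsub>dual_module R Q\<^esub> q \<Longrightarrow>
      f \<delta> = f \<zero>\<^bsub>dual_module R Q\<^esub>"
    using continuous_map_pointwise_topology_discrete[OF assms(4) D.M.zero_closed] by blast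
  show ?thesis
  proof (rule that[OF F])
    fix \<phi> \<psi>
    assume \<phi>: "\<phi> \<in> carrier (dual_module R Q)" and \<psi>: "\<psi> \<in> carrier (dual_module R Q)"
      and agree: "\<forall>q\<in>F. \<phi> q = \<psi> q"
    define \<delta> where "\<delta> = \<phi> \<ominus>\<^bsub>dual_module R Q\<^esub> \<psi>"
    have \<delta>: "\<delta> \<in> carrier (dual_module R Q)"
      unfolding \<delta>_def using \<phi> \<psi> by simp
    have \<phi>_eq: "\<phi> = \<delta> \<oplus>\<^bsub>dual_module R Q\<^esub> \<psi>"
      unfolding \<delta>_def using \<phi> \<psi> by (simp add: a_minus_def D.M.a_assoc D.M.l_neg)
    have "\<delta> q = \<zero>\<^bsub>dual_module R Q\<^esub> q" if q: "q \<in> F" for q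
    proof -
      have q_carrier: "q \<in> carrier Q"
        using q F(2) by blast
      have "\<delta> q \<oplus>\<^bsub>R\<^esub> \<psi> q = \<psi> q"
        using agree q q_carrier arg_cong[OF \<phi>_eq, of "\<lambda>g. g q"] by (simp add: D.add_eq)
      then show ?thesis
        using q_carrier D.carrier_apply[OF \<delta>] D.carrier_apply[OF \<psi>] by (simp add: D.zero_eq)
    qed
    then have "f \<delta> = \<zero>\<^bsub>P\<^esub>"
      using near_zero[OF \<delta>] by simp
    then show "f \<phi> = f \<psi>"
      using \<phi>_eq \<delta> \<psi> by simp
  qed
qed

section \<open>Projective modules\<close>

lemma lin_map_coordinate_dual:
  assumes "right_module R Q" "lin_map R Q (free_right_module R J) i" "j \<in> J"
  shows "(\<lambda>q\<in>carrier Q. i q j) \<in> carrier (dual_module R Q)"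
proof -
  have "(\<lambda>q\<in>carrier Q. (\<lambda>v\<in>carrier (free_right_module R J). v j) (i q)) \<in> carrier (dual_module R Q)"
    using assms(1,2) free_right_module_coordinate_dual[OF right_module_ring[OF assms(1)] assms(3)]
    by (rule dual_module_precomp)
  moreover have "(\<lambda>q\<in>carrier Q. (\<lambda>v\<in>carrier (free_right_module R J). v j) (i q)) = (\<lambda>q\<in>carrier Q. i q j)"
    using assms(2) by (intro restrict_ext) (auto simp: lin_map_def)
  ultimately show ?thesis by simp
qed

lemma dual_basis_expansion:
  assumes "right_module R Q" "lin_map R Q (free_right_module R J) i"
    and "lin_map R (free_right_module R J) Q p" "\<And>q. q \<in> carrier Q \<Longrightarrow> p (i q) = q"
    and "\<phi> \<in> carrier (dual_module R Q)" "q \<in> carrier Q"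
    and "finite K" "K \<subseteq> J" "\<forall>j\<in>J - K. i q j = \<zero>\<^bsub>R\<^esub>"
  shows "\<phi> q = (\<Oplus>\<^bsub>R\<^esub>j\<in>K. \<phi> (p (free_basis R J j)) \<otimes>\<^bsub>R\<^esub> i q j)"
proof -
  interpret R: ring R using assms(1) by (rule right_module_ring)
  define g where "g = (\<lambda>v\<in>carrier (free_right_module R J). \<phi> (p v))"
  have g: "g \<in> carrier (dual_module R (free_right_module R J))"
    unfolding g_def using right_module_free_right_module[OF R.ring_axioms] assms(3,5)
    by (rule dual_module_precomp)
  have i_q: "i q \<in> carrier (free_right_module R J)"
    using assms(2,6) by (auto simp: lin_map_def)
  have basis: "free_basis R J j \<in> carrier (free_right_module R J)" if "j \<in> K" for j
    using that assms(8) by (blast intro: free_basis_carrier[OF R.ring_axioms])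
  have "\<phi> q = g (i q)"
    unfolding g_def using i_q assms(4,6) by simp
  also have "\<dots> = (\<Oplus>\<^bsub>R\<^esub>j\<in>K. g (free_basis R J j) \<otimes>\<^bsub>R\<^esub> i q j)"
    using R.ring_axioms g i_q assms(7-9) by (rule dual_free_right_module_expansion)
  also have "\<dots> = (\<Oplus>\<^bsub>R\<^esub>j\<in>K. \<phi> (p (free_basis R J j)) \<otimes>\<^bsub>R\<^esub> i q j)"
  proof (rule R.finsum_cong')
    show "(\<lambda>j. \<phi> (p (free_basis R J j)) \<otimes>\<^bsub>R\<^esub> i q j) \<in> K \<rightarrow> carrier R"
    proof
      fix j assume j: "j \<in> K"
      have "p (free_basis R J j) \<in> carrier Q"
        using assms(3) basis[OF j] by (auto simp: lin_map_def)
      moreover have "i q j \<in> carrier R"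
        using i_q j assms(8) by (auto simp: free_right_module_def)
      ultimately show "\<phi> (p (free_basis R J j)) \<otimes>\<^bsub>R\<^esub> i q j \<in> carrier R"
        using dual_module_apply_closed[OF assms(5)] by blast
    qed
  qed (simp_all add: g_def basis)
  finally show ?thesis .
qed

lemma projective_right_dual_interpolation:
  fixes Q :: "('r, 'q) module"
  assumes "projective_right R Q" "finite F" "F \<subseteq> carrier Q"
  obtains \<Theta> where "finite \<Theta>" "\<Theta> \<subseteq> carrier (dual_module R Q)"
    "\<And>\<phi>. \<phi> \<in> carrier (dual_module R Q) \<Longrightarrow> \<exists>\<psi>\<in>lspan R (dual_module R Q) \<Theta>. \<forall>q\<in>F. \<psi> q = \<phi> q"
proof -
  have Q: "right_module R Q"
    using assms(1) by (simp add: projective_right_def)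
  interpret R: ring R using Q by (rule right_module_ring)
  obtain J :: "'q set" and i p where i: "lin_map R Q (free_right_module R J) i"
    and p: "lin_map R (free_right_module R J) Q p" and p_i: "\<And>q. q \<in> carrier Q \<Longrightarrow> p (i q) = q"
    using assms(1) unfolding projective_right_def by blast
  have i_carrier: "i q \<in> carrier (free_right_module R J)" if "q \<in> carrier Q" for q
    using i that by (auto simp: lin_map_def)
  define \<theta> where "\<theta> j = (\<lambda>q\<in>carrier Q. i q j)" for j
  have \<theta>: "\<theta> \<in> J \<rightarrow> carrier (dual_module R Q)"
    unfolding \<theta>_def using Q i by (blast intro: lin_map_coordinate_dual)
  define J\<^sub>0 where "J\<^sub>0 = (\<Union>q\<in>F. {j\<in>J. i q j \<noteq> \<zero>\<^bsub>R\<^esub>})"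
  have "finite J\<^sub>0"
    unfolding J\<^sub>0_def using assms(2)
  proof (rule finite_UN_I)
    fix q assume "q \<in> F"
    then show "finite {j\<in>J. i q j \<noteq> \<zero>\<^bsub>R\<^esub>}"
      using assms(3) by (intro free_right_module_support_finite i_carrier) blast
  qed
  moreover have "J\<^sub>0 \<subseteq> J"
    unfolding J\<^sub>0_def by blast
  ultimately have J\<^sub>0: "finite J\<^sub>0" "J\<^sub>0 \<subseteq> J" .
  show ?thesis
  proof (rule that[of "\<theta> ` J\<^sub>0"])
    show "finite (\<theta> ` J\<^sub>0)" "\<theta> ` J\<^sub>0 \<subseteq> carrier (dual_module R Q)"
      using J\<^sub>0 \<theta> by auto
    fix \<phi> assume \<phi>: "\<phi> \<in> carrier (dual_module R Q)"
    define c where "c j = \<phi> (p (free_basis R J j))" for j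
    have c: "c \<in> J\<^sub>0 \<rightarrow> carrier R"
    proof
      fix j assume "j \<in> J\<^sub>0"
      then have "free_basis R J j \<in> carrier (free_right_module R J)"
        using J\<^sub>0(2) by (blast intro: free_basis_carrier[OF R.ring_axioms])
      then have "p (free_basis R J j) \<in> carrier Q"
        using p by (auto simp: lin_map_def)
      then show "c j \<in> carrier R"
        unfolding c_def by (rule dual_module_apply_closed[OF \<phi>])
    qed
    let ?\<psi> = "\<Oplus>\<^bsub>dual_module R Q\<^esub>j\<in>J\<^sub>0. smult (dual_module R Q) (c j) (\<theta> j)"
    have "?\<psi> \<in> lspan R (dual_module R Q) (\<theta> ` J\<^sub>0)"
      using left_module_dual_module[OF Q] _ _ J\<^sub>0(1) c
    proof (rule lspan_lincomb)
      show "finite (\<theta> ` J\<^sub>0)" "\<theta> ` J\<^sub>0 \<subseteq> carrier (dual_module R Q)" "\<theta> \<in> J\<^sub>0 \<rightarrow> \<theta> ` J\<^sub>0"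
        using J\<^sub>0 \<theta> by auto
    qed
    moreover have "?\<psi> q = \<phi> q" if q: "q \<in> F" for q
    proof -
      have q_carrier: "q \<in> carrier Q"
        using q assms(3) by blast
      have "?\<psi> q = (\<Oplus>\<^bsub>R\<^esub>j\<in>J\<^sub>0. c j \<otimes>\<^bsub>R\<^esub> \<theta> j q)"
        using Q J\<^sub>0(1) c _ q_carrier by (rule dual_module_lincomb_apply) (use J\<^sub>0(2) \<theta> in blast)
      also have "\<dots> = (\<Oplus>\<^bsub>R\<^esub>j\<in>J\<^sub>0. \<phi> (p (free_basis R J j)) \<otimes>\<^bsub>R\<^esub> i q j)"
        using q_carrier by (simp add: \<theta>_def c_def)
      also have "\<dots> = \<phi> q"
      proof (rule dual_basis_expansion[symmetric, OF Q i p p_i \<phi> q_carrier J\<^sub>0])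
        show "\<forall>j\<in>J - J\<^sub>0. i q j = \<zero>\<^bsub>R\<^esub>"
          using q unfolding J\<^sub>0_def by blast
      qed
      finally show ?thesis .
    qed
    ultimately show "\<exists>\<psi>\<in>lspan R (dual_module R Q) (\<theta> ` J\<^sub>0). \<forall>q\<in>F. \<psi> q = \<phi> q"
      by blast
  qed
qed

theorem lemma3p1:
  fixes R :: "('r, 'c) ring_scheme" and P :: "('r, 'p) module" and Q :: "('r, 'q) module"
    and f :: "('q \<Rightarrow> 'r) \<Rightarrow> 'p"
  assumes "ring R"
    and "projective_left R P"
    and "projective_right R Q"
    and "lin_map R (dual_module R Q) P f"
    and "continuous_map (pointwise_topology R Q) (discrete_topology (carrier P)) f"
  shows "finitely_generated_image R P (f ` carrier (dual_module R Q))"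
proof -
  have P: "left_module R P"
    using assms(2) by (simp add: projective_left_def)
  have Q: "right_module R Q"
    using assms(3) by (simp add: projective_right_def)
  have D: "left_module R (dual_module R Q)"
    using Q by (rule left_module_dual_module)
  obtain F where F: "finite F" "F \<subseteq> carrier Q"
    and determined: "\<And>\<phi> \<psi>. \<phi> \<in> carrier (dual_module R Q) \<Longrightarrow> \<psi> \<in> carrier (dual_module R Q) \<Longrightarrow>
      \<forall>q\<in>F. \<phi> q = \<psi> q \<Longrightarrow> f \<phi> = f \<psi>"
    using continuous_lin_map_finitely_determined[OF Q P assms(4,5)] by blast
  obtain \<Theta> where \<Theta>: "finite \<Theta>" "\<Theta> \<subseteq> carrier (dual_module R Q)"
    and interpolate: "\<And>\<phi>. \<phi> \<in> carrier (dual_module R Q) \<Longrightarrow>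
      \<exists>\<psi>\<in>lspan R (dual_module R Q) \<Theta>. \<forall>q\<in>F. \<psi> q = \<phi> q"
    using projective_right_dual_interpolation[OF assms(3) F] by blast
  have "f ` carrier (dual_module R Q) \<subseteq> f ` lspan R (dual_module R Q) \<Theta>"
  proof
    fix y assume "y \<in> f ` carrier (dual_module R Q)"
    then obtain \<phi> where \<phi>: "\<phi> \<in> carrier (dual_module R Q)" and y: "y = f \<phi>"
      by blast
    obtain \<psi> where \<psi>: "\<psi> \<in> lspan R (dual_module R Q) \<Theta>" and agree: "\<forall>q\<in>F. \<psi> q = \<phi> q"
      using interpolate[OF \<phi>] by blast
    have "\<psi> \<in> carrier (dual_module R Q)"
      using lspan_closed[OF D \<Theta>(2)] \<psi> by blast
    then have "y = f \<psi>"
      using determined \<phi> agree y by metis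
    then show "y \<in> f ` lspan R (dual_module R Q) \<Theta>"
      using \<psi> by blast
  qed
  also have "\<dots> \<subseteq> lspan R P (f ` \<Theta>)"
    using D P assms(4) \<Theta> by (rule lin_map_image_lspan)
  finally have "f ` carrier (dual_module R Q) \<subseteq> lspan R P (f ` \<Theta>)" .
  moreover have "lspan R P (f ` \<Theta>) \<subseteq> f ` carrier (dual_module R Q)"
    using D P assms(4) finite_imageI[OF \<Theta>(1)] by (rule lspan_subset_lin_map_image) (use \<Theta>(2) in blast)
  moreover have "f ` \<Theta> \<subseteq> carrier P"
    using assms(4) \<Theta>(2) by (auto simp: lin_map_def)
  ultimately show ?thesis
    unfolding finitely_generated_image_def using \<Theta>(1) by blast
qed

end
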